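(* Every fractal gasket $K$ satisfies the sharp separation condition: there is a constant $C'>0$ such that for every $k\ge1$ and all $I,J\in\Sigma^k$ with $\varphi_I(K)\cap\varphi_J(K)=\emptyset$, $$\operatorname{dist}(\varphi_I(K),\varphi_J(K))\ge C'\min\{\operatorname{diam}\varphi_I(K),\operatorname{diam}\varphi_J(K)\}.$$
   Context: Let $\Delta\subset\mathbb R^2$ be the triangle with vertices $(0,0)$, $(1,0)$, $(1/2,\sqrt3/2)$. A fractal gasket is the attractor $K$ (the nonempty compact set with $K=\bigcup_j\varphi_j(K)$) of $\{\varphi_j(z)=r_j(z+d_j)\}_{j=1}^N$, $r_j\in(0,1)$, $d_j\in\mathbb R^2$, such that $\bigcup_j\varphi_j(\Delta)\subset\Delta$ and, for $i\ne j$, $\varphi_i(\Delta)$ and $\varphi_j(\Delta)$ intersect only at common vertices. $\Sigma=\{1,\dots,N\}$; for $I=i_1\cdots i_k\in\Sigma^k$, $\varphi_I=\varphi_{i_1}\circ\cdots\circ\varphi_{i_k}$. $\operatorname{dist}(A,B)=\min\{\|a-b\|:a\in A,b\in B\}$. *)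

theory Defs
  imports "HOL-Analysis.Analysis"
begin

text \<open>The plane R^2 is modelled by the complex numbers.\<close>

definition tri_vertices :: "complex set" where
  "tri_vertices = {0, 1, Complex (1/2) (sqrt 3 / 2)}"

definition Delta :: "complex set" where
  "Delta = convex hull tri_vertices"

definition sim_map :: "(nat \<Rightarrow> real) \<Rightarrow> (nat \<Rightarrow> complex) \<Rightarrow> nat \<Rightarrow> complex \<Rightarrow> complex" where
  "sim_map r d j z = complex_of_real (r j) * (z + d j)"

definition word_map :: "(nat \<Rightarrow> real) \<Rightarrow> (nat \<Rightarrow> complex) \<Rightarrow> nat list \<Rightarrow> complex \<Rightarrow> complex" where
  "word_map r d I = foldr (\<lambda>i f. sim_map r d i \<circ> f) I id"

definition fractal_gasket :: "nat \<Rightarrow> (nat \<Rightarrow> real) \<Rightarrow> (nat \<Rightarrow> complex) \<Rightarrow> complex set \<Rightarrow> bool" where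
  "fractal_gasket N r d K \<longleftrightarrow>
     (\<forall>j\<in>{1..N}. 0 < r j \<and> r j < 1) \<and>
     (\<Union>j\<in>{1..N}. sim_map r d j ` Delta) \<subseteq> Delta \<and>
     (\<forall>i\<in>{1..N}. \<forall>j\<in>{1..N}. i \<noteq> j \<longrightarrow>
        sim_map r d i ` Delta \<inter> sim_map r d j ` Delta
          \<subseteq> sim_map r d i ` tri_vertices \<inter> sim_map r d j ` tri_vertices) \<and>
     K \<noteq> {} \<and> compact K \<and> K = (\<Union>j\<in>{1..N}. sim_map r d j ` K)"

end

(* The piece phi_I(K) is a copy of K scaled by r_I = r_{i_1} ... r_{i_k}, so it suffices to bound the
   distance of disjoint pieces of equal level below by c min(r_I, r_J). A common first letter rescales
   both pieces by the same factor, so we may assume that the first letters i and j differ. If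
   phi_i(Delta) and phi_j(Delta) are disjoint, compactness gives a uniform gap. Otherwise they meet in
   a single point p = phi_i(v_a) = phi_j(v_b) with a \<noteq> b, and the two triangles lie in opposite
   cones at p, whence dist(x,p) + dist(y,p) <= 4 dist(x,y). Since the pieces are disjoint, p misses
   one of them, say phi_iI(K); and a vertex v missed by a piece phi_U(K) keeps distance at least
   c r_U from it, by induction on U: either v lies outside phi_j(Delta), at a uniform distance, or
   phi_j fixes v and the distance scales by r_j. *)

theory Submission
  imports Defs
begin

(* Vertices and barycentric coordinates of Delta; an index a \<ge> 3 behaves like 0. *)
definition vertex :: "nat \<Rightarrow> complex" where
  "vertex a = (if a = 1 then 1 else if a = 2 then Complex (1/2) (sqrt 3 / 2) else 0)"

definition bary :: "nat \<Rightarrow> complex \<Rightarrow> real" where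
  "bary a z = (if a = 1 then Re z - Im z / sqrt 3 else if a = 2 then 2 * Im z / sqrt 3
               else 1 - Re z - Im z / sqrt 3)"

definition centroid :: complex where
  "centroid = Complex (1/2) (sqrt 3 / 6)"

lemma less_3_cases: "a < (3::nat) \<Longrightarrow> a = 0 \<or> a = 1 \<or> a = 2"
  by auto

lemma tri_vertices_eq: "tri_vertices = vertex ` {..<3}"
proof -
  have "{..<3::nat} = {0, 1, 2}" by auto
  then show ?thesis by (auto simp: tri_vertices_def vertex_def)
qed

lemma bary_sum: "bary 0 z + bary 1 z + bary 2 z = 1"
  by (simp add: bary_def field_simps)

lemma bary_decompose: "z = of_real (bary 1 z) + of_real (bary 2 z) * vertex 2"
  by (simp add: bary_def vertex_def complex_eq_iff field_simps)

lemma bary_vertex: "a < 3 \<Longrightarrow> b < 3 \<Longrightarrow> bary a (vertex b) = (if a = b then 1 else 0)"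
  by (auto simp: bary_def vertex_def field_simps dest!: less_3_cases)

lemma bary_centroid: "a < 3 \<Longrightarrow> bary a centroid = 1/3"
  by (auto simp: bary_def centroid_def field_simps dest!: less_3_cases)

lemma bary_convex_combination:
  "bary a (of_real t * u + of_real (1 - t) * w) = t * bary a u + (1 - t) * bary a w"
  by (simp add: bary_def algebra_simps diff_divide_distrib add_divide_distrib)

lemma bary_sim_map_diff:
  "bary a (sim_map r d j z) - bary a (sim_map r d j w) = r j * (bary a z - bary a w)"
  by (simp add: bary_def sim_map_def algebra_simps diff_divide_distrib add_divide_distrib)

lemma bary_lipschitz: "\<bar>bary a x - bary a y\<bar> \<le> 2 * dist x y"
proof -
  have re: "\<bar>Re x - Re y\<bar> \<le> dist x y" and im: "\<bar>Im x - Im y\<bar> \<le> dist x y"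
    by (metis abs_Re_le_cmod minus_complex.simps(1) dist_norm,
        metis abs_Im_le_cmod minus_complex.simps(2) dist_norm)
  have "\<bar>Im x / sqrt 3 - Im y / sqrt 3\<bar> = \<bar>Im x - Im y\<bar> / sqrt 3"
    by (simp add: diff_divide_distrib[symmetric])
  also have "\<dots> \<le> \<bar>Im x - Im y\<bar>"
    using mult_left_mono[of 1 "sqrt 3" "\<bar>Im x - Im y\<bar>"] by (simp add: divide_le_eq)
  finally have "\<bar>Im x / sqrt 3 - Im y / sqrt 3\<bar> \<le> dist x y"
    using im by linarith
  then show ?thesis
    unfolding bary_def using re im by (auto simp: abs_if split: if_splits)
qed

lemma Delta_eq_bary_nonneg: "Delta = {z. \<forall>a<3. 0 \<le> bary a z}"
proof -
  have "Delta = convex hull {0, 1, vertex 2}"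
    by (simp add: Delta_def tri_vertices_def vertex_def)
  also have "\<dots> = {u *\<^sub>R 0 + v *\<^sub>R 1 + w *\<^sub>R vertex 2 | u v w.
                     0 \<le> u \<and> 0 \<le> v \<and> 0 \<le> w \<and> u + v + w = 1}"
    by (rule convex_hull_3)
  also have "\<dots> = {z. \<forall>a<3. 0 \<le> bary a z}"
  proof (intro set_eqI iffI)
    fix z
    assume "z \<in> {u *\<^sub>R 0 + v *\<^sub>R 1 + w *\<^sub>R vertex 2 | u v w.
                 0 \<le> u \<and> 0 \<le> v \<and> 0 \<le> w \<and> u + v + w = 1}"
    then obtain u v w where uvw: "0 \<le> u" "0 \<le> v" "0 \<le> w" "u + v + w = 1"
      and z: "z = v *\<^sub>R 1 + w *\<^sub>R vertex 2" by auto
    have "bary 1 z = v" "bary 2 z = w"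
      using z by (auto simp: bary_def vertex_def scaleR_conv_of_real field_simps)
    moreover have "bary 0 z = u"
      using bary_sum[of z] uvw(4) calculation by linarith
    ultimately show "z \<in> {z. \<forall>a<3. 0 \<le> bary a z}"
      using uvw by (auto dest!: less_3_cases)
  next
    fix z
    assume "z \<in> {z. \<forall>a<3. 0 \<le> bary a z}"
    then show "z \<in> {u *\<^sub>R 0 + v *\<^sub>R 1 + w *\<^sub>R vertex 2 | u v w.
                     0 \<le> u \<and> 0 \<le> v \<and> 0 \<le> w \<and> u + v + w = 1}"
      using bary_sum[of z] bary_decompose[of z]
      by (intro CollectI exI[of _ "bary 0 z"] exI[of _ "bary 1 z"] exI[of _ "bary 2 z"])
         (simp add: scaleR_conv_of_real)
  qed
  finally show ?thesis .
qed

lemma compact_Delta: "compact Delta"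
  unfolding Delta_def tri_vertices_def by (intro compact_convex_hull finite_imp_compact) auto

lemma vertex_in_Delta: "a < 3 \<Longrightarrow> vertex a \<in> Delta"
  by (auto simp: Delta_eq_bary_nonneg bary_vertex)

lemma bary_le_one:
  assumes "z \<in> Delta" "a < 3"
  shows "bary a z \<le> 1"
proof -
  have "0 \<le> bary 0 z" "0 \<le> bary 1 z" "0 \<le> bary 2 z"
    using assms(1) by (auto simp: Delta_eq_bary_nonneg)
  then show ?thesis
    using bary_sum[of z] less_3_cases[OF assms(2)] by auto
qed

lemma dist_vertex_le: 
  assumes "z \<in> Delta" "a < 3"
  shows "dist z (vertex a) \<le> 1 - bary a z"
proof -
  have nonneg: "0 \<le> bary 0 z" "0 \<le> bary 1 z" "0 \<le> bary 2 z"
    using assms(1) by (auto simp: Delta_eq_bary_nonneg)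
  have norms: "norm (vertex 2) = 1" "norm (vertex 2 - 1) = 1"
    by (auto simp: vertex_def cmod_def power2_eq_square field_simps)
  define u v w where "u = bary 0 z" "v = bary 1 z" "w = bary 2 z"
  have sum: "u + v + w = 1"
    using bary_sum[of z] by (simp add: u_v_w_def)
  have z: "z = of_real v + of_real w * vertex 2"
    using bary_decompose[of z] by (simp add: u_v_w_def)
  have one: "of_real u + of_real v + of_real w = (1::complex)"
    using sum by (metis of_real_1 of_real_add)
  consider "a = 0" | "a = 1" | "a = 2" using assms(2) by force
  then show ?thesis
  proof cases
    case 1
    have "norm z \<le> norm (of_real v :: complex) + norm (of_real w * vertex 2)"
      unfolding z by (rule norm_triangle_ineq)
    moreover have "vertex 0 = 0" by (simp add: vertex_def)
    ultimately show ?thesis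
      using 1 sum nonneg by (simp add: u_v_w_def norm_mult norms dist_norm)
  next
    case 2
    have "z - 1 = z - (of_real u + of_real v + of_real w)"
      using one by simp
    also have "\<dots> = of_real w * (vertex 2 - 1) - of_real u"
      unfolding z by (simp add: algebra_simps)
    finally have "norm (z - 1) \<le> norm (of_real w * (vertex 2 - 1)) + norm (of_real u :: complex)"
      by (metis norm_triangle_ineq4)
    moreover have "vertex 1 = 1" by (simp add: vertex_def)
    ultimately show ?thesis
      using 2 sum nonneg by (simp add: u_v_w_def norm_mult norms dist_norm)
  next
    case 3
    have "z - vertex 2 = z - (of_real u + of_real v + of_real w) * vertex 2"
      using one by simp
    also have "\<dots> = of_real v * (1 - vertex 2) - of_real u * vertex 2"
      unfolding z by (simp add: algebra_simps)
    finally have "norm (z - vertex 2) \<le> norm (of_real v * (1 - vertex 2)) + norm (of_real u * vertex 2)"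
      by (metis norm_triangle_ineq4)
    then show ?thesis
      using 3 sum nonneg by (simp add: u_v_w_def norm_mult norms norm_minus_commute[of 1] dist_norm)
  qed
qed

lemma compact_invariant_subset_closed:
  fixes K D :: "'a::heine_borel set"
  assumes "compact K" "closed D" "D \<noteq> {}"
    and K_sub: "K \<subseteq> (\<Union>j\<in>J. f j ` K)"
    and f_D: "\<And>j. j \<in> J \<Longrightarrow> f j ` D \<subseteq> D"
    and contraction: "\<And>j x y. j \<in> J \<Longrightarrow> dist (f j x) (f j y) \<le> L j * dist x y"
    and L: "\<And>j. j \<in> J \<Longrightarrow> 0 \<le> L j \<and> L j < 1"
  shows "K \<subseteq> D"
proof (cases "K = {}")
  case False
  define g where "g x = infdist x D" for x
  have "continuous_on K g"
    unfolding g_def by (intro continuous_on_infdist continuous_on_id)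
  then obtain x0 where x0: "x0 \<in> K" and max: "\<And>y. y \<in> K \<Longrightarrow> g y \<le> g x0"
    using continuous_attains_sup[OF \<open>compact K\<close> False] by blast
  obtain j x1 where j: "j \<in> J" and x1: "x1 \<in> K" "x0 = f j x1"
    using x0 K_sub by blast
  obtain y1 where y1: "y1 \<in> D" "infdist x1 D = dist x1 y1"
    using infdist_attains_inf[OF \<open>closed D\<close> \<open>D \<noteq> {}\<close>] by blast
  have "g x0 \<le> dist x0 (f j y1)"
    unfolding g_def using f_D[OF j] y1(1) by (auto intro: infdist_le)
  also have "\<dots> \<le> L j * g x1"
    using contraction[OF j] x1(2) y1(2) by (simp add: g_def)
  also have "\<dots> \<le> L j * g x0"
    using max[OF x1(1)] L[OF j] by (simp add: mult_left_mono)
  finally have "g x0 \<le> 0"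
    using L[OF j] by (simp add: mult_le_cancel_right1)
  have "infdist y D = 0" if "y \<in> K" for y
    using max[OF that] \<open>g x0 \<le> 0\<close> infdist_nonneg[of y D] by (simp add: g_def)
  then show ?thesis
    using in_closed_iff_infdist_zero[OF \<open>closed D\<close> \<open>D \<noteq> {}\<close>] by blast
qed simp

lemma finite_compact_pairs_uniformly_separated:
  fixes P :: "('a::heine_borel set \<times> 'a set) set"
  assumes "finite P" and "\<And>A B. (A, B) \<in> P \<Longrightarrow> compact A \<and> compact B \<and> A \<inter> B = {}"
  shows "\<exists>c>0. \<forall>A B x y. (A, B) \<in> P \<longrightarrow> x \<in> A \<longrightarrow> y \<in> B \<longrightarrow> c \<le> dist x y"
proof -
  have "\<forall>p\<in>P. \<exists>c>0. \<forall>x\<in>fst p. \<forall>y\<in>snd p. c \<le> dist x y"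
    using assms(2) by (force intro: separate_compact_closed compact_imp_closed)
  then obtain g where g: "\<And>p. p \<in> P \<Longrightarrow> g p > 0 \<and> (\<forall>x\<in>fst p. \<forall>y\<in>snd p. g p \<le> dist x y)"
    by metis
  define c where "c = Min (insert 1 (g ` P))"
  have "c > 0"
    unfolding c_def using assms(1) g by (simp add: Min_gr_iff)
  moreover have "c \<le> g p" if "p \<in> P" for p
    unfolding c_def using assms(1) that by (simp add: Min_le)
  ultimately show ?thesis
    using g by (force intro!: exI[of _ c])
qed

definition word_ratio :: "(nat \<Rightarrow> real) \<Rightarrow> nat list \<Rightarrow> real" where
  "word_ratio r I = prod_list (map r I)"

lemma word_ratio_simps [simp]:
  "word_ratio r [] = 1"
  "word_ratio r (i # I) = r i * word_ratio r I"
  by (simp_all add: word_ratio_def)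

lemma word_map_Nil: "word_map r d [] = id"
  by (simp add: word_map_def)

lemma word_map_Cons: "word_map r d (i # I) = sim_map r d i \<circ> word_map r d I"
  by (simp add: word_map_def)

lemma image_word_map_Cons: "word_map r d (i # I) ` S = sim_map r d i ` word_map r d I ` S"
  by (simp add: word_map_Cons image_comp)

lemma sim_map_diff: "sim_map r d j x - sim_map r d j y = of_real (r j) * (x - y)"
  by (simp add: sim_map_def algebra_simps)

lemma word_map_diff: "word_map r d I x - word_map r d I y = of_real (word_ratio r I) * (x - y)"
  by (induction I) (simp_all add: word_map_Nil word_map_Cons sim_map_diff)

lemma compact_sim_map_Delta: "compact (sim_map r d j ` Delta)"
  by (rule compact_continuous_image) (auto simp: sim_map_def intro!: continuous_intros compact_Delta)

definition toward_centroid :: "nat \<Rightarrow> real \<Rightarrow> complex" where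
  "toward_centroid a t = of_real t * centroid + of_real (1 - t) * vertex a"

lemma bary_toward_centroid:
  "b < 3 \<Longrightarrow> a < 3 \<Longrightarrow> bary b (toward_centroid a t) = t / 3 + (1 - t) * (if b = a then 1 else 0)"
  unfolding toward_centroid_def bary_convex_combination by (simp add: bary_centroid bary_vertex)

lemma toward_centroid_in_Delta: "a < 3 \<Longrightarrow> 0 \<le> t \<Longrightarrow> t \<le> 1 \<Longrightarrow> toward_centroid a t \<in> Delta"
  by (auto simp: Delta_eq_bary_nonneg bary_toward_centroid)

lemma toward_centroid_not_vertex:
  assumes "a < 3" "b < 3" "0 < t" "t \<le> 1"
  shows "toward_centroid a t \<noteq> vertex b"
proof
  assume "toward_centroid a t = vertex b"
  then have "bary b (toward_centroid a t) = 1"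
    using bary_vertex[OF assms(2) assms(2)] by simp
  then show False
    using assms by (simp add: bary_toward_centroid split: if_splits)
qed

lemma sim_map_toward_centroid:
  "sim_map r d k (toward_centroid a t) = sim_map r d k (vertex a) + of_real (r k * t) * (centroid - vertex a)"
proof -
  have "sim_map r d k (toward_centroid a t) - sim_map r d k (vertex a) = of_real (r k * t) * (centroid - vertex a)"
    by (simp add: sim_map_diff toward_centroid_def algebra_simps)
  then show ?thesis
    by (simp add: algebra_simps)
qed

lemma dist_sim_map_vertex_le:
  assumes "0 \<le> r k" "a < 3" "b < 3" "a \<noteq> b" "x \<in> Delta"
  shows "dist (sim_map r d k x) (sim_map r d k (vertex a)) \<le>
    (bary b (sim_map r d k x) - bary a (sim_map r d k x)) -
    (bary b (sim_map r d k (vertex a)) - bary a (sim_map r d k (vertex a)))"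
proof -
  have "dist x (vertex a) \<le> bary b x - bary a x + 1"
    using dist_vertex_le[OF assms(5,2)] assms(3,5) by (auto simp: Delta_eq_bary_nonneg)
  then have "r k * dist x (vertex a) \<le> r k * (bary b x - bary a x + 1)"
    using assms(1) by (rule mult_left_mono)
  moreover have "dist (sim_map r d k x) (sim_map r d k (vertex a)) = r k * dist x (vertex a)"
    using assms(1) by (simp add: dist_norm sim_map_diff norm_mult)
  moreover have "r k * (bary b x - bary a x + 1) =
    (bary b (sim_map r d k x) - bary a (sim_map r d k x)) -
    (bary b (sim_map r d k (vertex a)) - bary a (sim_map r d k (vertex a)))"
    using bary_sim_map_diff[of b r d k x "vertex a"] bary_sim_map_diff[of a r d k x "vertex a"]
      bary_vertex[OF assms(2,2)] bary_vertex[OF assms(3,2)] assms(4)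
    by (simp add: algebra_simps)
  ultimately show ?thesis
    by simp
qed

locale gasket =
  fixes N :: nat and r :: "nat \<Rightarrow> real" and d :: "nat \<Rightarrow> complex" and K :: "complex set"
  assumes fractal_gasket: "fractal_gasket N r d K"
begin

abbreviation \<phi> :: "nat \<Rightarrow> complex \<Rightarrow> complex" where
  "\<phi> \<equiv> sim_map r d"

abbreviation word :: "nat list \<Rightarrow> bool" where
  "word I \<equiv> set I \<subseteq> {1..N}"

lemma ratio_pos: "j \<in> {1..N} \<Longrightarrow> 0 < r j"
  and ratio_less_one: "j \<in> {1..N} \<Longrightarrow> r j < 1"
  and sim_map_Delta_subset: "j \<in> {1..N} \<Longrightarrow> \<phi> j ` Delta \<subseteq> Delta"
  and sim_map_Delta_Int:
    "i \<in> {1..N} \<Longrightarrow> j \<in> {1..N} \<Longrightarrow> i \<noteq> j \<Longrightarrow>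
      \<phi> i ` Delta \<inter> \<phi> j ` Delta \<subseteq> \<phi> i ` tri_vertices \<inter> \<phi> j ` tri_vertices"
  and K_nonempty: "K \<noteq> {}"
  and compact_K: "compact K"
  and K_eq: "K = (\<Union>j\<in>{1..N}. \<phi> j ` K)"
  using fractal_gasket unfolding fractal_gasket_def by blast+

lemma dist_sim_map: "j \<in> {1..N} \<Longrightarrow> dist (\<phi> j x) (\<phi> j y) = r j * dist x y"
  using ratio_pos[of j] by (simp add: dist_norm sim_map_diff norm_mult)

lemma inj_sim_map: "j \<in> {1..N} \<Longrightarrow> inj (\<phi> j)"
  using ratio_pos[of j] by (intro injI) (simp add: sim_map_def)

lemma word_ratio_pos: "word I \<Longrightarrow> 0 < word_ratio r I"
  by (induction I) (simp_all add: ratio_pos)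

lemma word_ratio_le_one: "word I \<Longrightarrow> word_ratio r I \<le> 1"
proof (induction I)
  case (Cons i I)
  then show ?case
    using ratio_pos[of i] ratio_less_one[of i] word_ratio_pos[of I] by (simp add: mult_le_one)
qed simp

lemma dist_word_map: "word I \<Longrightarrow> dist (word_map r d I x) (word_map r d I y) = word_ratio r I * dist x y"
  using word_ratio_pos[of I] by (simp add: dist_norm word_map_diff norm_mult)

lemma word_map_Delta_subset: "word I \<Longrightarrow> word_map r d I ` Delta \<subseteq> Delta"
proof (induction I)
  case (Cons i I)
  then have "\<phi> i ` word_map r d I ` Delta \<subseteq> \<phi> i ` Delta"
    by (simp add: image_mono)
  then show ?case
    using sim_map_Delta_subset[of i] Cons.prems by (simp add: image_word_map_Cons)
qed (simp add: word_map_Nil)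

lemma K_subset_Delta: "K \<subseteq> Delta"
proof (rule compact_invariant_subset_closed[where J = "{1..N}" and f = \<phi> and L = r])
  show "closed Delta" "Delta \<noteq> {}"
    using compact_Delta compact_imp_closed vertex_in_Delta[of 0] by auto
  show "K \<subseteq> (\<Union>j\<in>{1..N}. \<phi> j ` K)"
    using K_eq by blast
  show "0 \<le> r j \<and> r j < 1" if "j \<in> {1..N}" for j
    using ratio_pos[OF that] ratio_less_one[OF that] by simp
qed (use compact_K sim_map_Delta_subset dist_sim_map in simp_all)

lemma word_map_K_subset_Delta: "word I \<Longrightarrow> word_map r d I ` K \<subseteq> Delta"
  using word_map_Delta_subset K_subset_Delta by blast

lemma diameter_word_map_le: "word I \<Longrightarrow> diameter (word_map r d I ` K) \<le> word_ratio r I * diameter K"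
proof (rule diameter_le)
  fix x y assume "word I" "x \<in> word_map r d I ` K" "y \<in> word_map r d I ` K"
  then obtain x' y' where "x' \<in> K" "y' \<in> K" "x = word_map r d I x'" "y = word_map r d I y'"
    by auto
  moreover have "dist x' y' \<le> diameter K"
    using compact_K \<open>x' \<in> K\<close> \<open>y' \<in> K\<close> by (simp add: compact_imp_bounded diameter_bounded_bound)
  ultimately show "norm (x - y) \<le> word_ratio r I * diameter K"
    using dist_word_map[OF \<open>word I\<close>] word_ratio_pos[OF \<open>word I\<close>] by (simp add: dist_norm)
qed (use K_nonempty in auto)

(* On Delta, bary a attains its maximum 1 only at vertex a. *)
lemma sim_map_fixes_vertex:
  assumes j: "j \<in> {1..N}" and a: "a < 3" and v: "vertex a \<in> \<phi> j ` Delta"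
  shows "\<phi> j (vertex a) = vertex a"
proof -
  obtain z where z: "z \<in> Delta" "vertex a = \<phi> j z"
    using v by auto
  define p where "p = \<phi> j (vertex a)"
  have p: "p \<in> Delta"
    using sim_map_Delta_subset[OF j] vertex_in_Delta[OF a] by (auto simp: p_def)
  have "1 - bary a p = r j * (bary a z - 1)"
    using bary_sim_map_diff[of a r d j z "vertex a"] z(2) bary_vertex[OF a a] by (simp add: p_def)
  also have "\<dots> \<le> 0"
    using bary_le_one[OF z(1) a] ratio_pos[OF j] by (simp add: mult_le_0_iff)
  finally have "dist p (vertex a) \<le> 0"
    using dist_vertex_le[OF p a] bary_le_one[OF p a] by linarith
  then show ?thesis
    by (simp add: p_def)
qed

lemma vertex_separation_induct:
  assumes "0 \<le> c"
    and K_gap: "\<And>a x. a < 3 \<Longrightarrow> vertex a \<notin> K \<Longrightarrow> x \<in> K \<Longrightarrow> c \<le> dist x (vertex a)"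
    and Delta_gap: "\<And>j a x. j \<in> {1..N} \<Longrightarrow> a < 3 \<Longrightarrow> vertex a \<notin> \<phi> j ` Delta \<Longrightarrow>
      x \<in> \<phi> j ` Delta \<Longrightarrow> c \<le> dist x (vertex a)"
    and "word U" "a < 3" "vertex a \<notin> word_map r d U ` K" "x \<in> word_map r d U ` K"
  shows "c * word_ratio r U \<le> dist x (vertex a)"
  using assms(4-)
proof (induction U arbitrary: x)
  case Nil
  then show ?case
    using K_gap by (simp add: word_map_Nil)
next
  case (Cons j U)
  then have j: "j \<in> {1..N}" and U: "word U" by auto
  obtain x' where x': "x' \<in> word_map r d U ` K" "x = \<phi> j x'"
    using Cons.prems(4) by (auto simp: image_word_map_Cons)
  show ?case
  proof (cases "vertex a \<in> \<phi> j ` Delta")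
    case False
    have "x \<in> \<phi> j ` Delta"
      using x' word_map_K_subset_Delta[OF U] by blast
    then have "c \<le> dist x (vertex a)"
      using Delta_gap[OF j \<open>a < 3\<close> False] by blast
    moreover have "c * word_ratio r (j # U) \<le> c"
      using \<open>0 \<le> c\<close> word_ratio_le_one[OF Cons.prems(1)] by (simp add: mult_left_le)
    ultimately show ?thesis
      by linarith
  next
    case True
    then have fixed: "\<phi> j (vertex a) = vertex a"
      using sim_map_fixes_vertex[OF j \<open>a < 3\<close>] by blast
    then have "vertex a \<notin> word_map r d U ` K"
      using Cons.prems(3) by (force simp: image_word_map_Cons)
    then have "c * word_ratio r U \<le> dist x' (vertex a)"
      using Cons.IH[OF U \<open>a < 3\<close> _ x'(1)] by blast
    then have "r j * (c * word_ratio r U) \<le> r j * dist x' (vertex a)"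
      using ratio_pos[OF j] by simp
    also have "\<dots> = dist x (vertex a)"
      using dist_sim_map[OF j, of x' "vertex a"] x'(2) fixed by simp
    finally show ?thesis
      by (simp add: algebra_simps)
  qed
qed

definition missed_vertex_gap :: "real \<Rightarrow> bool" where
  "missed_vertex_gap c \<longleftrightarrow> (\<forall>U a x. word U \<longrightarrow> a < 3 \<longrightarrow> vertex a \<notin> word_map r d U ` K \<longrightarrow>
     x \<in> word_map r d U ` K \<longrightarrow> c * word_ratio r U \<le> dist x (vertex a))"

lemma missed_vertex_gap_exists: "\<exists>c>0. missed_vertex_gap c"
proof -
  define P where "P = (\<lambda>a. (K, {vertex a})) ` {a. a < 3 \<and> vertex a \<notin> K} \<union>
    (\<lambda>(j, a). (\<phi> j ` Delta, {vertex a})) ` {(j, a). j \<in> {1..N} \<and> a < 3 \<and> vertex a \<notin> \<phi> j ` Delta}"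
  have "finite P"
  proof -
    have "{(j, a). j \<in> {1..N} \<and> a < 3 \<and> vertex a \<notin> \<phi> j ` Delta} \<subseteq> {1..N} \<times> {..<3}"
      by auto
    then have "finite {(j, a). j \<in> {1..N} \<and> a < 3 \<and> vertex a \<notin> \<phi> j ` Delta}"
      by (rule finite_subset) simp
    then show ?thesis
      unfolding P_def by simp
  qed
  moreover have "compact A \<and> compact B \<and> A \<inter> B = {}" if "(A, B) \<in> P" for A B
    using that unfolding P_def
    by (auto simp: compact_K compact_sim_map_Delta) (metis rev_image_eqI)
  ultimately obtain c where "c > 0"
    and c: "\<And>A B x y. (A, B) \<in> P \<Longrightarrow> x \<in> A \<Longrightarrow> y \<in> B \<Longrightarrow> c \<le> dist x y"
    using finite_compact_pairs_uniformly_separated by meson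
  have "c * word_ratio r U \<le> dist x (vertex a)"
    if "word U" "a < 3" "vertex a \<notin> word_map r d U ` K" "x \<in> word_map r d U ` K" for U a x
  proof (rule vertex_separation_induct[OF less_imp_le[OF \<open>c > 0\<close>] _ _ that])
    show "c \<le> dist x (vertex a)" if "a < 3" "vertex a \<notin> K" "x \<in> K" for a x
    proof (rule c)
      show "(K, {vertex a}) \<in> P"
        using that unfolding P_def by blast
    qed (use that in auto)
    show "c \<le> dist x (vertex a)"
      if "j \<in> {1..N}" "a < 3" "vertex a \<notin> \<phi> j ` Delta" "x \<in> \<phi> j ` Delta" for j a x
    proof (rule c)
      show "(\<phi> j ` Delta, {vertex a}) \<in> P"
        using that unfolding P_def by (intro UnI2 image_eqI[where x = "(j, a)"]) auto
    qed (use that in auto)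
  qed
  then show ?thesis
    using \<open>c > 0\<close> unfolding missed_vertex_gap_def by blast
qed

(* Otherwise both triangles would contain a segment from their common vertex towards their centroids. *)
lemma sim_maps_differ_at_vertex:
  assumes i: "i \<in> {1..N}" and j: "j \<in> {1..N}" and "i \<noteq> j" and a: "a < 3"
  shows "\<phi> i (vertex a) \<noteq> \<phi> j (vertex a)"
proof
  assume same: "\<phi> i (vertex a) = \<phi> j (vertex a)"
  define m where "m = min (r i) (r j)"
  define q where "q = \<phi> i (vertex a) + of_real m * (centroid - vertex a)"
  have q: "q = \<phi> k (toward_centroid a (m / r k))" and "toward_centroid a (m / r k) \<in> Delta"
    if "k \<in> {i, j}" for k
  proof -
    have "0 < r k" "m \<le> r k"
      using that ratio_pos i j by (auto simp: m_def)
    moreover have "0 < m"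
      using ratio_pos i j by (simp add: m_def)
    ultimately show "q = \<phi> k (toward_centroid a (m / r k))" "toward_centroid a (m / r k) \<in> Delta"
      using that same a by (auto simp: q_def sim_map_toward_centroid toward_centroid_in_Delta)
  qed
  then have "q \<in> \<phi> i ` Delta \<inter> \<phi> j ` Delta"
    by blast
  then obtain b where b: "b < 3" "q = \<phi> i (vertex b)"
    using sim_map_Delta_Int[OF i j \<open>i \<noteq> j\<close>] by (auto simp: tri_vertices_eq)
  then have "toward_centroid a (m / r i) = vertex b"
    using q[of i] inj_sim_map[OF i] by (auto dest: injD)
  moreover have "0 < m / r i" "m / r i \<le> 1"
    using ratio_pos i j by (auto simp: m_def)
  ultimately show False
    using toward_centroid_not_vertex[OF a b(1)] by blast
qed

lemma shared_vertex:
  assumes i: "i \<in> {1..N}" and j: "j \<in> {1..N}" and "i \<noteq> j" and "p \<in> \<phi> i ` Delta \<inter> \<phi> j ` Delta"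
  obtains a b where "a < 3" "b < 3" "a \<noteq> b" "p = \<phi> i (vertex a)" "p = \<phi> j (vertex b)"
proof -
  have "p \<in> \<phi> i ` vertex ` {..<3}" "p \<in> \<phi> j ` vertex ` {..<3}"
    using assms(4) sim_map_Delta_Int[OF i j \<open>i \<noteq> j\<close>] by (auto simp: tri_vertices_eq)
  then obtain a b where "a < 3" "b < 3" "p = \<phi> i (vertex a)" "p = \<phi> j (vertex b)"
    by auto
  moreover have "a \<noteq> b"
    using calculation sim_maps_differ_at_vertex[OF i j \<open>i \<noteq> j\<close>] by metis
  ultimately show ?thesis
    using that by blast
qed

(* At a shared vertex the two triangles lie in opposite cones, separated by a level line of
   the affine function bary b - bary a. *)
lemma dist_shared_vertex_le:
  assumes i: "i \<in> {1..N}" and j: "j \<in> {1..N}" and "a < 3" "b < 3" "a \<noteq> b"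
    and p: "p = \<phi> i (vertex a)" "p = \<phi> j (vertex b)"
    and "x \<in> \<phi> i ` Delta" "y \<in> \<phi> j ` Delta"
  shows "dist x p + dist y p \<le> 4 * dist x y"
proof -
  obtain x' y' where x': "x' \<in> Delta" "x = \<phi> i x'" and y': "y' \<in> Delta" "y = \<phi> j y'"
    using assms(8,9) by blast
  have "dist x p \<le> (bary b x - bary a x) - (bary b p - bary a p)"
    unfolding x'(2) p(1)
    using ratio_pos[OF i] assms(3-5) x'(1) by (intro dist_sim_map_vertex_le) auto
  moreover have "dist y p \<le> (bary a y - bary b y) - (bary a p - bary b p)"
    unfolding y'(2) p(2)
    using ratio_pos[OF j] assms(3-5) y'(1) by (intro dist_sim_map_vertex_le) auto
  moreover have "\<bar>bary a x - bary a y\<bar> \<le> 2 * dist x y" "\<bar>bary b x - bary b y\<bar> \<le> 2 * dist x y"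
    by (rule bary_lipschitz)+
  ultimately show ?thesis
    by linarith
qed

lemma dist_pieces_at_missed_vertex:
  assumes vertex_gap: "missed_vertex_gap c"
    and i: "i \<in> {1..N}" and j: "j \<in> {1..N}" and "i \<noteq> j" and I: "word I" and J: "word J"
    and p: "p \<in> \<phi> i ` Delta \<inter> \<phi> j ` Delta" "p \<notin> word_map r d (i # I) ` K"
    and x: "x \<in> word_map r d (i # I) ` K" and y: "y \<in> word_map r d (j # J) ` K"
  shows "c * word_ratio r (i # I) \<le> 4 * dist x y"
proof -
  obtain a b where ab: "a < 3" "b < 3" "a \<noteq> b" "p = \<phi> i (vertex a)" "p = \<phi> j (vertex b)"
    using shared_vertex[OF i j \<open>i \<noteq> j\<close> p(1)] .
  obtain x' where x': "x' \<in> word_map r d I ` K" "x = \<phi> i x'"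
    using x by (auto simp: image_word_map_Cons)
  have "vertex a \<notin> word_map r d I ` K"
    using p(2) ab(4) by (auto simp: image_word_map_Cons)
  then have "r i * (c * word_ratio r I) \<le> r i * dist x' (vertex a)"
    using vertex_gap I ab(1) x'(1) ratio_pos[OF i] unfolding missed_vertex_gap_def by simp
  also have "\<dots> = dist x p"
    using dist_sim_map[OF i] x'(2) ab(4) by simp
  also have "\<dots> \<le> 4 * dist x y"
  proof -
    have "x \<in> \<phi> i ` Delta" "y \<in> \<phi> j ` Delta"
      using x y word_map_K_subset_Delta[OF I] word_map_K_subset_Delta[OF J]
      by (auto simp: image_word_map_Cons)
    from dist_shared_vertex_le[OF i j ab this] show ?thesis
      using zero_le_dist[of y p] by linarith
  qed
  finally show ?thesis
    by (simp add: algebra_simps)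
qed

lemma dist_pieces_at_shared_point:
  assumes vertex_gap: "missed_vertex_gap c"
    and "0 \<le> c"
    and i: "i \<in> {1..N}" and j: "j \<in> {1..N}" and "i \<noteq> j" and I: "word I" and J: "word J"
    and disjoint: "word_map r d (i # I) ` K \<inter> word_map r d (j # J) ` K = {}"
    and p: "p \<in> \<phi> i ` Delta \<inter> \<phi> j ` Delta"
    and x: "x \<in> word_map r d (i # I) ` K" and y: "y \<in> word_map r d (j # J) ` K"
  shows "c * min (word_ratio r (i # I)) (word_ratio r (j # J)) \<le> 4 * dist x y"
proof (cases "p \<in> word_map r d (i # I) ` K")
  case True
  then have "p \<notin> word_map r d (j # J) ` K"
    using disjoint by blast
  then have "c * word_ratio r (j # J) \<le> 4 * dist x y"
    using dist_pieces_at_missed_vertex[OF vertex_gap j i _ J I _ _ y x] p \<open>i \<noteq> j\<close>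
    by (auto simp: dist_commute)
  then show ?thesis
    by (rule order_trans[OF mult_left_mono[OF min.cobounded2 \<open>0 \<le> c\<close>]])
next
  case False
  then have "c * word_ratio r (i # I) \<le> 4 * dist x y"
    using dist_pieces_at_missed_vertex[OF vertex_gap i j \<open>i \<noteq> j\<close> I J p False x y] by blast
  then show ?thesis
    by (rule order_trans[OF mult_left_mono[OF min.cobounded1 \<open>0 \<le> c\<close>]])
qed

definition triangle_gap :: "real \<Rightarrow> bool" where
  "triangle_gap e \<longleftrightarrow> (\<forall>i j x y. i \<in> {1..N} \<longrightarrow> j \<in> {1..N} \<longrightarrow> \<phi> i ` Delta \<inter> \<phi> j ` Delta = {} \<longrightarrow>
     x \<in> \<phi> i ` Delta \<longrightarrow> y \<in> \<phi> j ` Delta \<longrightarrow> e \<le> dist x y)"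

definition pieces_separated :: "real \<Rightarrow> nat list \<Rightarrow> nat list \<Rightarrow> bool" where
  "pieces_separated c I J \<longleftrightarrow> (\<forall>x\<in>word_map r d I ` K. \<forall>y\<in>word_map r d J ` K.
     c * min (word_ratio r I) (word_ratio r J) \<le> dist x y)"

lemma pieces_separated_different_first_letters:
  assumes vertex_gap: "missed_vertex_gap c"
    and triangle_gap: "triangle_gap e"
    and "0 < c" "0 < e"
    and i: "i \<in> {1..N}" and j: "j \<in> {1..N}" and "i \<noteq> j" and I: "word I" and J: "word J"
    and disjoint: "word_map r d (i # I) ` K \<inter> word_map r d (j # J) ` K = {}"
  shows "pieces_separated (min e (c / 4)) (i # I) (j # J)"
  unfolding pieces_separated_def
proof (intro ballI)
  fix x y assume x: "x \<in> word_map r d (i # I) ` K" and y: "y \<in> word_map r d (j # J) ` K"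
  define m where "m = min (word_ratio r (i # I)) (word_ratio r (j # J))"
  have m: "0 < m" "m \<le> 1"
    using i j I J word_ratio_pos[of "i # I"] word_ratio_pos[of "j # J"] word_ratio_le_one[of "i # I"]
    by (auto simp: m_def)
  show "min e (c / 4) * m \<le> dist x y"
  proof (cases "\<phi> i ` Delta \<inter> \<phi> j ` Delta = {}")
    case True
    have "x \<in> \<phi> i ` Delta" "y \<in> \<phi> j ` Delta"
      using x y word_map_K_subset_Delta[OF I] word_map_K_subset_Delta[OF J]
      by (auto simp: image_word_map_Cons)
    then have "e \<le> dist x y"
      using triangle_gap i j True unfolding triangle_gap_def by blast
    moreover have "min e (c / 4) * m \<le> e"
      using m \<open>0 < c\<close> \<open>0 < e\<close> by (intro order_trans[OF mult_left_le min.cobounded1]) auto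
    ultimately show ?thesis
      by linarith
  next
    case False
    then obtain p where "p \<in> \<phi> i ` Delta \<inter> \<phi> j ` Delta"
      by blast
    then have "c * m \<le> 4 * dist x y"
      unfolding m_def using \<open>0 < c\<close>
      by (intro dist_pieces_at_shared_point[OF vertex_gap _ i j \<open>i \<noteq> j\<close> I J disjoint _ x y]) auto
    moreover have "min e (c / 4) * m \<le> c / 4 * m"
      using m by (intro mult_right_mono) auto
    ultimately show ?thesis
      by linarith
  qed
qed

lemma triangle_gap_exists: "\<exists>e>0. triangle_gap e"
proof -
  define P where "P = (\<lambda>(i, j). (\<phi> i ` Delta, \<phi> j ` Delta)) `
    {(i, j). i \<in> {1..N} \<and> j \<in> {1..N} \<and> \<phi> i ` Delta \<inter> \<phi> j ` Delta = {}}"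
  have "finite {(i, j). i \<in> {1..N} \<and> j \<in> {1..N} \<and> \<phi> i ` Delta \<inter> \<phi> j ` Delta = {}}"
    by (rule finite_subset[of _ "{1..N} \<times> {1..N}"]) auto
  then have "finite P"
    unfolding P_def by simp
  moreover have "compact A \<and> compact B \<and> A \<inter> B = {}" if "(A, B) \<in> P" for A B
    using that compact_sim_map_Delta unfolding P_def by auto
  ultimately obtain e where "e > 0"
    and e: "\<And>A B x y. (A, B) \<in> P \<Longrightarrow> x \<in> A \<Longrightarrow> y \<in> B \<Longrightarrow> e \<le> dist x y"
    using finite_compact_pairs_uniformly_separated by meson
  have "(\<phi> i ` Delta, \<phi> j ` Delta) \<in> P"
    if "i \<in> {1..N}" "j \<in> {1..N}" "\<phi> i ` Delta \<inter> \<phi> j ` Delta = {}" for i j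
    using that unfolding P_def by (intro image_eqI[where x = "(i, j)"]) auto
  then show ?thesis
    using \<open>e > 0\<close> e unfolding triangle_gap_def by blast
qed

lemma pieces_separated_Cons:
  assumes i: "i \<in> {1..N}" and "pieces_separated c I J"
  shows "pieces_separated c (i # I) (i # J)"
  unfolding pieces_separated_def
proof (intro ballI)
  fix x y assume "x \<in> word_map r d (i # I) ` K" "y \<in> word_map r d (i # J) ` K"
  then obtain x' y' where x': "x' \<in> word_map r d I ` K" "x = \<phi> i x'"
    and y': "y' \<in> word_map r d J ` K" "y = \<phi> i y'"
    by (auto simp: image_word_map_Cons)
  have "c * min (word_ratio r I) (word_ratio r J) \<le> dist x' y'"
    using assms(2) x'(1) y'(1) unfolding pieces_separated_def by blast
  then have "r i * (c * min (word_ratio r I) (word_ratio r J)) \<le> r i * dist x' y'"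
    using ratio_pos[OF i] by simp
  moreover have "r i * min (word_ratio r I) (word_ratio r J) = min (word_ratio r (i # I)) (word_ratio r (i # J))"
    using ratio_pos[OF i] by (simp add: min_mult_distrib_left)
  ultimately show "c * min (word_ratio r (i # I)) (word_ratio r (i # J)) \<le> dist x y"
    using dist_sim_map[OF i] x'(2) y'(2) by (simp add: algebra_simps)
qed

lemma pieces_separated_equal_length:
  "\<exists>c>0. \<forall>I J. word I \<longrightarrow> word J \<longrightarrow> length I = length J \<longrightarrow>
     word_map r d I ` K \<inter> word_map r d J ` K = {} \<longrightarrow> pieces_separated c I J"
proof -
  obtain c e where "c > 0" "missed_vertex_gap c" "e > 0" "triangle_gap e"
    using missed_vertex_gap_exists triangle_gap_exists by blast
  have "pieces_separated (min e (c / 4)) I J"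
    if "word I" "word J" "length I = length J" "word_map r d I ` K \<inter> word_map r d J ` K = {}" for I J
    using that
  proof (induction I arbitrary: J)
    case Nil
    then show ?case
      using K_nonempty by (simp add: word_map_Nil)
  next
    case (Cons i I)
    then obtain j J' where J: "J = j # J'"
      by (cases J) auto
    show ?case
    proof (cases "i = j")
      case True
      have "\<phi> i ` (word_map r d I ` K \<inter> word_map r d J' ` K) = {}"
        using Cons.prems(4) inj_sim_map[of i] Cons.prems(1) True unfolding J
        by (simp add: image_word_map_Cons image_Int)
      then have "pieces_separated (min e (c / 4)) I J'"
        using Cons.IH Cons.prems unfolding J by simp
      then show ?thesis
        using pieces_separated_Cons Cons.prems(1) True unfolding J by simp
    next
      case False
      then show ?thesis
        using pieces_separated_different_first_letters[OF \<open>missed_vertex_gap c\<close> \<open>triangle_gap e\<close> \<open>c > 0\<close> \<open>e > 0\<close>]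
          Cons.prems unfolding J by simp
    qed
  qed
  moreover have "min e (c / 4) > 0"
    using \<open>c > 0\<close> \<open>e > 0\<close> by simp
  ultimately show ?thesis
    by blast
qed

lemma setdist_pieces_ge:
  assumes I: "word I" and J: "word J" and "pieces_separated c I J" "0 < c"
  shows "c / (diameter K + 1) * min (diameter (word_map r d I ` K)) (diameter (word_map r d J ` K))
    \<le> setdist (word_map r d I ` K) (word_map r d J ` K)"
proof (rule le_setdistI)
  show "word_map r d I ` K \<noteq> {}" "word_map r d J ` K \<noteq> {}"
    using K_nonempty by auto
  have diam: "0 \<le> diameter K"
    using compact_K by (simp add: compact_imp_bounded diameter_ge_0)
  have "min (diameter (word_map r d I ` K)) (diameter (word_map r d J ` K))
      \<le> (diameter K + 1) * min (word_ratio r I) (word_ratio r J)"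
    using diameter_word_map_le[OF I] diameter_word_map_le[OF J] word_ratio_pos[OF I] word_ratio_pos[OF J] diam
    by (auto simp: min_def algebra_simps)
  then have "c / (diameter K + 1) * min (diameter (word_map r d I ` K)) (diameter (word_map r d J ` K))
      \<le> c / (diameter K + 1) * ((diameter K + 1) * min (word_ratio r I) (word_ratio r J))"
    using \<open>0 < c\<close> diam by (intro mult_left_mono) auto
  also have "\<dots> = c * min (word_ratio r I) (word_ratio r J)"
    using diam by simp
  finally show "c / (diameter K + 1) * min (diameter (word_map r d I ` K)) (diameter (word_map r d J ` K))
      \<le> dist x y" if "x \<in> word_map r d I ` K" "y \<in> word_map r d J ` K" for x y
    using assms(3) that unfolding pieces_separated_def by fastforce
qed

end

theorem lemma4p2:
  fixes N :: nat and r :: "nat \<Rightarrow> real" and d :: "nat \<Rightarrow> complex" and K :: "complex set"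
  assumes "fractal_gasket N r d K"
  shows "\<exists>C>0. \<forall>k\<ge>1. \<forall>I J. length I = k \<and> length J = k \<and>
            set I \<subseteq> {1..N} \<and> set J \<subseteq> {1..N} \<and>
            word_map r d I ` K \<inter> word_map r d J ` K = {} \<longrightarrow>
            setdist (word_map r d I ` K) (word_map r d J ` K)
              \<ge> C * min (diameter (word_map r d I ` K)) (diameter (word_map r d J ` K))"
proof -
  interpret gasket N r d K
    using assms by unfold_locales
  obtain c where "c > 0" and c: "\<And>I J. word I \<Longrightarrow> word J \<Longrightarrow> length I = length J \<Longrightarrow>
      word_map r d I ` K \<inter> word_map r d J ` K = {} \<Longrightarrow> pieces_separated c I J"
    using pieces_separated_equal_length by meson
  have "0 < c / (diameter K + 1)"
    using \<open>c > 0\<close> compact_K by (simp add: compact_imp_bounded diameter_ge_0 add_nonneg_pos)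
  then show ?thesis
    using c setdist_pieces_ge \<open>c > 0\<close> by (intro exI[of _ "c / (diameter K + 1)"]) auto
qed

end
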